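(* Let $n\ge1$ and let $f\in\mathcal{G}_1$ be $n$-ary, $f=2x_1\cdots x_n\left(\sum_{i=1}^n a_ix_i^2+\sum_{i=1}^n b_ix_i+c\right)$. (i) If $a_i=1$ for some $i$, then $4r_k\in C(f)$ for every $1\le k\le n+2$. (ii) If $b_i=1$ for some $i$, then $4r_k\in C(f)$ for every $1\le k\le n+1$.
   Context: All operations are on $\mathbb{Z}_8$. $\mathcal{G}_1$ is the set of all operations (of any arity $n\ge1$) of the form $2x_1\cdots x_n\left(\sum_{i=1}^n a_ix_i^2+\sum_{i=1}^n b_ix_i+c\right)$ with $a_i,b_i\in\{0,1\}$ and $c\in\{0,1,2,3\}$. For an operation $f$, $C(f)$ denotes the clone on $\mathbb{Z}_8$ generated by $f$ together with binary addition and all unary constant operations. $r_k=x_1x_2\cdots x_k$. *)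

theory Defs
  imports "HOL-Library.Numeral_Type"
begin

text \<open>An operation of arity n is
represented as a pair (n, g) with g :: (nat => 8) => 8 that only looks at
the arguments x 0, ..., x (n-1) (arguments are 0-indexed).\<close>

type_synonym z8op = "nat \<times> ((nat \<Rightarrow> 8) \<Rightarrow> 8)"

inductive_set clone_gen :: "z8op set \<Rightarrow> z8op set" for F :: "z8op set" where
  proj: "i < n \<Longrightarrow> (n, \<lambda>x. x i) \<in> clone_gen F"
| gen: "p \<in> F \<Longrightarrow> p \<in> clone_gen F"
| comp: "(m, g) \<in> clone_gen F \<Longrightarrow> (\<forall>j<m. (n, h j) \<in> clone_gen F)
          \<Longrightarrow> (n, \<lambda>x. g (\<lambda>j. h j x)) \<in> clone_gen F"

definition C :: "nat \<Rightarrow> ((nat \<Rightarrow> 8) \<Rightarrow> 8) \<Rightarrow> z8op set" where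
  "C n f = clone_gen ({(n, f), (2, \<lambda>x. x 0 + x 1)} \<union> {(1, \<lambda>x. c) | c. True})"

definition G1op :: "nat \<Rightarrow> (nat \<Rightarrow> 8) \<Rightarrow> (nat \<Rightarrow> 8) \<Rightarrow> 8 \<Rightarrow> (nat \<Rightarrow> 8) \<Rightarrow> 8" where
  "G1op n a b c = (\<lambda>x. 2 * (\<Prod>i<n. x i) *
      ((\<Sum>i<n. a i * (x i)^2) + (\<Sum>i<n. b i * x i) + c))"

definition four_r :: "nat \<Rightarrow> (nat \<Rightarrow> 8) \<Rightarrow> 8" where
  "four_r k = (\<lambda>x. 4 * (\<Prod>i<k. x i))"

end

theory Submission
  imports Defs
begin

text \<open>Substituting \<open>x\<^sub>i + x\<^sub>j\<close> for \<open>x\<^sub>i\<close> and subtracting the two specialisations (a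
\<^emph>\<open>polarization\<close>) keeps us inside any clone containing addition, since in \<open>\<int>\<^sub>8\<close>
negation is \<open>7\<close>-fold addition. Fix a coordinate \<open>i\<close> of \<open>f\<close>; as a function of \<open>x\<^sub>i = t\<close>,
\<open>f\<close> is \<open>h(t) = 2Pt(a\<^sub>it\<^sup>2 + b\<^sub>it + R)\<close> with \<open>P, R\<close> independent of \<open>x\<^sub>i\<close>. If \<open>a\<^sub>i = 1\<close>,
polarizing twice against two fresh variables extracts the cubic part:
\<open>3! \<cdot> 2 P x\<^sub>i y z = 12 P x\<^sub>i y z = 4 x\<^sub>1\<cdots>x\<^sub>n y z\<close>, i.e. \<open>4r\<^sub>n\<^sub>+\<^sub>2\<close>. If \<open>a\<^sub>i = 0\<close> and
\<open>b\<^sub>i = 1\<close>, polarizing once extracts \<open>2! \<cdot> 2 P x\<^sub>i y = 4r\<^sub>n\<^sub>+\<^sub>1\<close>. Setting the surplus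
variables to \<open>1\<close> gives every smaller \<open>4r\<^sub>k\<close>.\<close>

lemma clone_gen_arity_mono:
  assumes "(k, g) \<in> clone_gen F" "k \<le> m"
  shows "(m, g) \<in> clone_gen F"
proof -
  have "\<forall>j<k. (m, \<lambda>x. x j) \<in> clone_gen F"
    using assms(2) by (auto intro: clone_gen.proj)
  from clone_gen.comp[OF assms(1) this] show ?thesis
    by simp
qed

lemma clone_gen_fun_upd:
  assumes "(m, g) \<in> clone_gen F" "(m, t) \<in> clone_gen F" "i < m"
  shows "(m, \<lambda>x. g (x(i := t x))) \<in> clone_gen F"
proof -
  have "\<forall>j<m. (m, if j = i then t else (\<lambda>x. x j)) \<in> clone_gen F"
    using assms(2) by (auto intro: clone_gen.proj)
  from clone_gen.comp[OF assms(1) this] show ?thesis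
    by (simp add: fun_upd_def if_distrib[of "\<lambda>h. h _"])
qed

lemma clone_gen_fix_tail:
  assumes "(N, g) \<in> clone_gen F" "(1, \<lambda>_. d) \<in> clone_gen F" "1 \<le> k"
  shows "(k, \<lambda>x. g (\<lambda>j. if j < k then x j else d)) \<in> clone_gen F"
proof -
  have "\<forall>j<N. (k, if j < k then (\<lambda>x. x j) else (\<lambda>_. d)) \<in> clone_gen F"
    using clone_gen_arity_mono[OF assms(2,3)] by (auto intro: clone_gen.proj)
  from clone_gen.comp[OF assms(1) this] show ?thesis
    by (simp add: if_distrib[of "\<lambda>h. h _"])
qed

definition polarize :: "'i \<Rightarrow> 'i \<Rightarrow> (('i \<Rightarrow> 'a::plus) \<Rightarrow> 'b::minus) \<Rightarrow> ('i \<Rightarrow> 'a) \<Rightarrow> 'b" where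
  "polarize i j g = (\<lambda>x. g (x(i := x i + x j)) - g x - g (x(i := x j)))"

context
  fixes F :: "z8op set"
  assumes add_in_clone: "(2, \<lambda>x. x 0 + x 1) \<in> clone_gen F"
begin

lemma clone_gen_add:
  assumes "(m, g) \<in> clone_gen F" "(m, h) \<in> clone_gen F"
  shows "(m, \<lambda>x. g x + h x) \<in> clone_gen F"
proof -
  have "\<forall>j::nat<2. (m, if j = 0 then g else h) \<in> clone_gen F"
    using assms by auto
  from clone_gen.comp[OF add_in_clone this] show ?thesis
    by simp
qed

lemma clone_gen_of_nat_mult:
  assumes "(m, g) \<in> clone_gen F"
  shows "(m, \<lambda>x. of_nat (Suc k) * g x) \<in> clone_gen F"
proof (induction k)
  case 0
  then show ?case using assms by simp
next
  case (Suc k)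
  from clone_gen_add[OF this assms] show ?case
    by (simp add: distrib_right)
qed

lemma clone_gen_diff:
  assumes "(m, g) \<in> clone_gen F" "(m, h) \<in> clone_gen F"
  shows "(m, \<lambda>x. g x - h x) \<in> clone_gen F"
proof -
  have minus_eq: "of_nat (Suc 6) * v = - v" for v :: 8
  proof -
    have "(of_nat (Suc 6) :: 8) = - 1"
      by simp
    then show ?thesis
      by (metis mult_minus1)
  qed
  have "(m, \<lambda>x. - h x) \<in> clone_gen F"
    using clone_gen_of_nat_mult[OF assms(2), of 6] unfolding minus_eq .
  from clone_gen_add[OF assms(1) this] show ?thesis
    by simp
qed

lemma clone_gen_polarize:
  assumes "(m, g) \<in> clone_gen F" "i < m" "j < m"
  shows "(m, polarize i j g) \<in> clone_gen F"
proof -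
  have "(m, \<lambda>x. x i + x j) \<in> clone_gen F" "(m, \<lambda>x. x j) \<in> clone_gen F"
    using assms(2,3) by (auto intro: clone_gen_add clone_gen.proj)
  then have "(m, \<lambda>x. g (x(i := x i + x j))) \<in> clone_gen F" "(m, \<lambda>x. g (x(i := x j))) \<in> clone_gen F"
    using clone_gen_fun_upd[OF assms(1) _ assms(2)] by auto
  then show ?thesis
    unfolding polarize_def using assms(1) by (intro clone_gen_diff)
qed

end

lemma polarize_eq:
  assumes "\<And>t. g (x(i := t)) = h t"
  shows "polarize i j g x = h (x i + x j) - h (x i) - h (x j)"
  unfolding polarize_def using assms[symmetric, of "x i"] assms by simp

lemma quadratic_polarization:
  fixes P R u v :: "'a::comm_ring_1"
  assumes "\<And>t. h t = 2 * P * t * (t + R)"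
  shows "h (u + v) - h u - h v = 4 * P * u * v"
  unfolding assms by (simp add: algebra_simps)

lemma cubic_double_polarization:
  fixes P B R u v w :: "'a::comm_ring_1"
  assumes "\<And>t. h t = 2 * P * t * (t\<^sup>2 + B * t + R)"
    and "\<And>s. D s = h (s + v) - h s - h v"
  shows "D (u + w) - D u - D w = 12 * P * u * v * w"
  unfolding assms by (simp add: algebra_simps power2_eq_square)

lemma G1op_fun_upd:
  assumes "i < n"
  shows "G1op n a b c (x(i := t)) =
    2 * (\<Prod>j\<in>{..<n}-{i}. x j) * t * (a i * t\<^sup>2 + b i * t +
      ((\<Sum>j\<in>{..<n}-{i}. a j * (x j)\<^sup>2) + (\<Sum>j\<in>{..<n}-{i}. b j * x j) + c))"
  using assms
  by (simp add: G1op_def prod.remove[of "{..<n}" i] sum.remove[of "{..<n}" i] algebra_simps)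

lemma four_r_fix_tail:
  assumes "k \<le> N"
  shows "four_r N (\<lambda>j. if j < k then x j else 1) = four_r k x"
proof -
  have "{..<N} \<inter> {j. j < k} = {..<k}"
    using assms by auto
  then show ?thesis
    by (simp add: four_r_def prod.If_cases)
qed

lemma C_generators:
  shows "(n, f) \<in> C n f" "(2, \<lambda>x. x 0 + x 1) \<in> C n f" "(1, \<lambda>_. d) \<in> C n f"
  unfolding C_def by (auto intro: clone_gen.gen)

lemma four_r_in_C_le:
  assumes "(N, four_r N) \<in> C n f" "1 \<le> k" "k \<le> N"
  shows "(k, four_r k) \<in> C n f"
  using clone_gen_fix_tail[OF assms(1)[unfolded C_def] C_generators(3)[where d=1, unfolded C_def] assms(2)]
  by (simp add: four_r_fix_tail[OF assms(3)] C_def)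

lemma four_r_in_C_cubic:
  assumes "i < n" "a i = 1"
  shows "(n + 2, four_r (n + 2)) \<in> C n (G1op n a b c)"
proof -
  let ?f = "G1op n a b c"
  note add = C_generators(2)[of n ?f, unfolded C_def]
  note f = C_generators(1)[of n ?f, unfolded C_def]
  have "(n + 2, polarize i (n + 1) (polarize i n ?f)) \<in> C n ?f"
    unfolding C_def using assms(1)
    by (intro clone_gen_polarize[OF add] clone_gen_polarize[OF add] clone_gen_arity_mono[OF f]) auto
  moreover have "polarize i (n + 1) (polarize i n ?f) = four_r (n + 2)"
  proof
    fix x :: "nat \<Rightarrow> 8"
    define P where "P = (\<Prod>j\<in>{..<n}-{i}. x j)"
    define R where "R = (\<Sum>j\<in>{..<n}-{i}. a j * (x j)\<^sup>2) + (\<Sum>j\<in>{..<n}-{i}. b j * x j) + c"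
    define h where "h t = 2 * P * t * (t\<^sup>2 + b i * t + R)" for t
    define D where "D s = h (s + x n) - h s - h (x n)" for s
    have f_upd: "?f (x(i := t)) = h t" for t
      using G1op_fun_upd[OF assms(1)] assms(2) by (simp add: h_def P_def R_def)
    have "polarize i n ?f (x(i := s)) = D s" for s
      using polarize_eq[of ?f "x(i := s)" i h n] f_upd assms(1) by (simp add: D_def)
    then have "polarize i (n + 1) (polarize i n ?f) x = D (x i + x (n + 1)) - D (x i) - D (x (n + 1))"
      by (rule polarize_eq)
    also have "\<dots> = 12 * P * x i * x n * x (n + 1)"
      by (rule cubic_double_polarization[OF h_def D_def])
    also have "\<dots> = 4 * (\<Prod>j<n + 2. x j)"
    proof -
      have twelve: "(12::8) = 4"
        by simp
      have "(\<Prod>j<n + 2. x j) = P * x i * x n * x (n + 1)"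
        using assms(1) by (simp add: P_def prod.remove[of "{..<n}" i] mult_ac)
      then show ?thesis
        unfolding twelve by (simp add: mult_ac)
    qed
    finally show "polarize i (n + 1) (polarize i n ?f) x = four_r (n + 2) x"
      by (simp add: four_r_def)
  qed
  ultimately show ?thesis
    by simp
qed

lemma four_r_in_C_quadratic:
  assumes "i < n" "a i = 0" "b i = 1"
  shows "(n + 1, four_r (n + 1)) \<in> C n (G1op n a b c)"
proof -
  let ?f = "G1op n a b c"
  note add = C_generators(2)[of n ?f, unfolded C_def]
  note f = C_generators(1)[of n ?f, unfolded C_def]
  have "(n + 1, polarize i n ?f) \<in> C n ?f"
    unfolding C_def using assms(1)
    by (intro clone_gen_polarize[OF add] clone_gen_arity_mono[OF f]) auto
  moreover have "polarize i n ?f = four_r (n + 1)"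
  proof
    fix x :: "nat \<Rightarrow> 8"
    define P where "P = (\<Prod>j\<in>{..<n}-{i}. x j)"
    define R where "R = (\<Sum>j\<in>{..<n}-{i}. a j * (x j)\<^sup>2) + (\<Sum>j\<in>{..<n}-{i}. b j * x j) + c"
    define h where "h t = 2 * P * t * (t + R)" for t
    have "?f (x(i := t)) = h t" for t
      using G1op_fun_upd[OF assms(1)] assms(2,3) by (simp add: h_def P_def R_def)
    then have "polarize i n ?f x = h (x i + x n) - h (x i) - h (x n)"
      by (rule polarize_eq)
    also have "\<dots> = 4 * P * x i * x n"
      by (rule quadratic_polarization[OF h_def])
    also have "\<dots> = four_r (n + 1) x"
      using assms(1) by (simp add: four_r_def P_def prod.remove[of "{..<n}" i] mult_ac)
    finally show "polarize i n ?f x = four_r (n + 1) x" .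
  qed
  ultimately show ?thesis
    by simp
qed

theorem lemma4p1:
  fixes n :: nat and a b :: "nat \<Rightarrow> 8" and c :: 8
  assumes "n \<ge> 1"
    and "\<forall>i<n. a i \<in> {0, 1}"
    and "\<forall>i<n. b i \<in> {0, 1}"
    and "c \<in> {0, 1, 2, 3}"
  shows "((\<exists>i<n. a i = 1) \<longrightarrow>
            (\<forall>k. 1 \<le> k \<and> k \<le> n + 2 \<longrightarrow> (k, four_r k) \<in> C n (G1op n a b c)))
       \<and> ((\<exists>i<n. b i = 1) \<longrightarrow>
            (\<forall>k. 1 \<le> k \<and> k \<le> n + 1 \<longrightarrow> (k, four_r k) \<in> C n (G1op n a b c)))"
proof (intro conjI impI allI)
  fix k assume "\<exists>i<n. a i = 1" and k: "1 \<le> k \<and> k \<le> n + 2"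
  then obtain i where "i < n" "a i = 1"
    by blast
  from four_r_in_C_le[OF four_r_in_C_cubic[of i n a b c, OF this]] k
  show "(k, four_r k) \<in> C n (G1op n a b c)"
    by simp
next
  fix k assume "\<exists>i<n. b i = 1" and k: "1 \<le> k \<and> k \<le> n + 1"
  then obtain i where i: "i < n" "b i = 1"
    by blast
  with assms(2) consider "a i = 1" | "a i = 0"
    by blast
  then show "(k, four_r k) \<in> C n (G1op n a b c)"
  proof cases
    case 1
    from four_r_in_C_le[OF four_r_in_C_cubic[of i n a b c, OF i(1) this]] k show ?thesis
      by simp
  next
    case 2
    from four_r_in_C_le[OF four_r_in_C_quadratic[of i n a b c, OF i(1) this i(2)]] k show ?thesis
      by simp
  qed
qed

end
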